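(* Let $A=\{a_0,a_1,\dots,a_{k-1}\}\subseteq\mathcal{C}_n$ with $a_0<\dots<a_{k-1}$. Then the layer $\mathcal{L}^{a_0+1}_{a_0}\left(\sigma^{(n)}_k(A)\right)$ is a subsemiring of the simplex $\sigma^{(n)}_k(A)$.
   Context: $\mathcal{C}_n=\{0,1,\dots,n-1\}$ with its usual order; $\widehat{\mathcal{E}}_{\mathcal{C}_n}$ is the set of all order-preserving maps $\mathcal{C}_n\to\mathcal{C}_n$ (not required to fix $0$), a semiring with $(\alpha+\beta)(x)=\max(\alpha(x),\beta(x))$ and $(\alpha\cdot\beta)(x)=\beta(\alpha(x))$. The simplex $\sigma^{(n)}_k(A)$ is the set of all $\alpha\in\widehat{\mathcal{E}}_{\mathcal{C}_n}$ with $\mathrm{im}(\alpha)\subseteq A$. The layer $\mathcal{L}^{s}_{a_0}\left(\sigma^{(n)}_k(A)\right)$ is the set of $\alpha\in\sigma^{(n)}_k(A)$ with exactly $s$ elements $i\in\mathcal{C}_n$ satisfying $\alpha(i)=a_0$. *)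

theory Defs
  imports Main
begin

text \<open>C_n = {0..<n}. Maps C_n -> C_n are represented as functions nat => nat
  that are 0 outside {0..<n} (extensional convention).\<close>

definition Ehat :: "nat \<Rightarrow> (nat \<Rightarrow> nat) set" where
  "Ehat n = {\<alpha>. (\<forall>x<n. \<alpha> x < n) \<and> (\<forall>x y. x \<le> y \<and> y < n \<longrightarrow> \<alpha> x \<le> \<alpha> y)
                \<and> (\<forall>x. n \<le> x \<longrightarrow> \<alpha> x = 0)}"

definition eplus :: "nat \<Rightarrow> (nat \<Rightarrow> nat) \<Rightarrow> (nat \<Rightarrow> nat) \<Rightarrow> (nat \<Rightarrow> nat)" where
  "eplus n \<alpha> \<beta> = (\<lambda>x. if x < n then max (\<alpha> x) (\<beta> x) else 0)"

definition etimes :: "nat \<Rightarrow> (nat \<Rightarrow> nat) \<Rightarrow> (nat \<Rightarrow> nat) \<Rightarrow> (nat \<Rightarrow> nat)" where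
  "etimes n \<alpha> \<beta> = (\<lambda>x. if x < n then \<beta> (\<alpha> x) else 0)"

definition simplex :: "nat \<Rightarrow> nat set \<Rightarrow> (nat \<Rightarrow> nat) set" where
  "simplex n A = {\<alpha> \<in> Ehat n. \<alpha> ` {0..<n} \<subseteq> A}"

definition layer :: "nat \<Rightarrow> nat \<Rightarrow> nat \<Rightarrow> (nat \<Rightarrow> nat) set \<Rightarrow> (nat \<Rightarrow> nat) set" where
  "layer n s a S = {\<alpha> \<in> S. card {i \<in> {0..<n}. \<alpha> i = a} = s}"

definition subsemiring :: "nat \<Rightarrow> (nat \<Rightarrow> nat) set \<Rightarrow> (nat \<Rightarrow> nat) set \<Rightarrow> bool" where
  "subsemiring n T S \<longleftrightarrow> T \<subseteq> S \<and>
     (\<forall>\<alpha>\<in>T. \<forall>\<beta>\<in>T. eplus n \<alpha> \<beta> \<in> T \<and> etimes n \<alpha> \<beta> \<in> T)"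

end

theory Submission
  imports Defs
begin

text \<open>Every map in the simplex takes values \<open>\<ge> a\<^sub>0 = Min A\<close>, and monotonicity makes the
  preimage of \<open>a\<^sub>0\<close> an initial segment of \<open>C\<^sub>n\<close>. Hence the layer consists exactly of the
  maps with \<open>\<alpha> i = a\<^sub>0 \<longleftrightarrow> i \<le> a\<^sub>0\<close>. This property survives pointwise maxima, since both
  arguments are \<open>\<ge> a\<^sub>0\<close>, and composition, since \<open>\<beta> (\<alpha> i) = a\<^sub>0\<close> iff \<open>\<alpha> i \<le> a\<^sub>0\<close> iff \<open>\<alpha> i = a\<^sub>0\<close>.\<close>

lemma eplus_in_simplex:
  assumes "\<alpha> \<in> simplex n A" "\<beta> \<in> simplex n A"
  shows "eplus n \<alpha> \<beta> \<in> simplex n A"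
proof -
  have "max (\<alpha> x) (\<beta> x) \<in> A" if "x < n" for x
    using assms that by (auto simp: simplex_def max_def)
  moreover have "max (\<alpha> x) (\<beta> x) \<le> max (\<alpha> y) (\<beta> y)" if "x \<le> y" "y < n" for x y
  proof (rule max.mono)
    show "\<alpha> x \<le> \<alpha> y" "\<beta> x \<le> \<beta> y"
      using assms that by (simp_all add: simplex_def Ehat_def)
  qed
  ultimately show ?thesis
    using assms by (auto simp: simplex_def Ehat_def eplus_def)
qed

lemma etimes_in_simplex:
  assumes "\<alpha> \<in> simplex n A" "\<beta> \<in> simplex n A"
  shows "etimes n \<alpha> \<beta> \<in> simplex n A"
proof -
  have \<alpha>_range: "\<alpha> x < n" if "x < n" for x
    using assms(1) that by (simp add: simplex_def Ehat_def)
  have "\<beta> (\<alpha> x) \<le> \<beta> (\<alpha> y)" if "x \<le> y" "y < n" for x y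
    using assms that \<alpha>_range[OF \<open>y < n\<close>] by (simp add: simplex_def Ehat_def)
  then show ?thesis
    using assms \<alpha>_range by (auto simp: simplex_def Ehat_def etimes_def)
qed

lemma Min_le_simplex_value:
  assumes "finite A" "\<alpha> \<in> simplex n A" "i < n"
  shows "Min A \<le> \<alpha> i"
proof -
  have "\<alpha> i \<in> A" using assms(2,3) by (auto simp: simplex_def)
  then show ?thesis using assms(1) by simp
qed

lemma card_level_set_eq_Suc_iff:
  assumes mono: "\<And>x y. x \<le> y \<Longrightarrow> y < n \<Longrightarrow> \<alpha> x \<le> \<alpha> y"
    and lower: "\<And>i. i < n \<Longrightarrow> a \<le> \<alpha> i" and "a < n"
  shows "card {i \<in> {0..<n}. \<alpha> i = a} = a + 1 \<longleftrightarrow> (\<forall>i<n. \<alpha> i = a \<longleftrightarrow> i \<le> a)"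
proof
  let ?S = "{i \<in> {0..<n}. \<alpha> i = a}"
  have down_closed: "j \<in> ?S" if "i \<in> ?S" "j \<le> i" for i j
  proof -
    from that have "j < n" "\<alpha> j \<le> \<alpha> i" "\<alpha> i = a"
      using mono by auto
    with lower[OF \<open>j < n\<close>] show ?thesis by simp
  qed
  assume card: "card ?S = a + 1"
  show "\<forall>i<n. \<alpha> i = a \<longleftrightarrow> i \<le> a"
  proof (intro allI impI iffI)
    fix i assume "i < n" "\<alpha> i = a"
    then have "{0..i} \<subseteq> ?S"
      using down_closed[of i] by auto
    then have "card {0..i} \<le> card ?S"
      by (intro card_mono) auto
    with card show "i \<le> a" by simp
  next
    fix i assume i: "i < n" "i \<le> a"
    show "\<alpha> i = a"
    proof (rule ccontr)
      assume "\<alpha> i \<noteq> a"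
      then have "i \<notin> ?S" by simp
      then have "?S \<subseteq> {0..<i}"
        using down_closed by (meson atLeastLessThan_iff not_le subsetI zero_le)
      then have "card ?S \<le> i"
        using card_mono[of "{0..<i}" ?S] by simp
      with card i show False by simp
    qed
  qed
next
  assume "\<forall>i<n. \<alpha> i = a \<longleftrightarrow> i \<le> a"
  then have "{i \<in> {0..<n}. \<alpha> i = a} = {0..<a + 1}"
    using \<open>a < n\<close> by auto
  then show "card {i \<in> {0..<n}. \<alpha> i = a} = a + 1" by simp
qed

lemma layer_Min_iff:
  assumes "A \<subseteq> {0..<n}" "A \<noteq> {}"
  shows "\<alpha> \<in> layer n (Min A + 1) (Min A) (simplex n A) \<longleftrightarrow>
    \<alpha> \<in> simplex n A \<and> (\<forall>i<n. \<alpha> i = Min A \<longleftrightarrow> i \<le> Min A)"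
proof -
  have fin: "finite A" using assms(1) finite_subset by blast
  then have "Min A < n" using assms by (meson Min_in atLeastLessThan_iff subsetD)
  have "card {i \<in> {0..<n}. \<alpha> i = Min A} = Min A + 1 \<longleftrightarrow> (\<forall>i<n. \<alpha> i = Min A \<longleftrightarrow> i \<le> Min A)"
    if "\<alpha> \<in> simplex n A"
    using that \<open>Min A < n\<close>
    by (intro card_level_set_eq_Suc_iff Min_le_simplex_value[OF fin])
       (auto simp: simplex_def Ehat_def)
  then show ?thesis by (auto simp: layer_def)
qed

lemma eplus_in_layer_Min:
  assumes A: "A \<subseteq> {0..<n}" "A \<noteq> {}"
    and \<alpha>: "\<alpha> \<in> layer n (Min A + 1) (Min A) (simplex n A)"
    and \<beta>: "\<beta> \<in> layer n (Min A + 1) (Min A) (simplex n A)"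
  shows "eplus n \<alpha> \<beta> \<in> layer n (Min A + 1) (Min A) (simplex n A)"
proof -
  have fin: "finite A" using A(1) finite_subset by blast
  note \<alpha>' = \<alpha>[unfolded layer_Min_iff[OF A]] and \<beta>' = \<beta>[unfolded layer_Min_iff[OF A]]
  have "eplus n \<alpha> \<beta> i = Min A \<longleftrightarrow> i \<le> Min A" if "i < n" for i
    using that \<alpha>' \<beta>' Min_le_simplex_value[OF fin, of _ n i] by (auto simp: eplus_def max_def)
  with \<alpha>' \<beta>' show ?thesis
    unfolding layer_Min_iff[OF A] by (simp add: eplus_in_simplex)
qed

lemma etimes_in_layer_Min:
  assumes A: "A \<subseteq> {0..<n}" "A \<noteq> {}"
    and \<alpha>: "\<alpha> \<in> layer n (Min A + 1) (Min A) (simplex n A)"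
    and \<beta>: "\<beta> \<in> layer n (Min A + 1) (Min A) (simplex n A)"
  shows "etimes n \<alpha> \<beta> \<in> layer n (Min A + 1) (Min A) (simplex n A)"
proof -
  have fin: "finite A" using A(1) finite_subset by blast
  note \<alpha>' = \<alpha>[unfolded layer_Min_iff[OF A]] and \<beta>' = \<beta>[unfolded layer_Min_iff[OF A]]
  have "etimes n \<alpha> \<beta> i = Min A \<longleftrightarrow> i \<le> Min A" if "i < n" for i
  proof -
    have "\<alpha> i < n" using \<alpha>' that by (simp add: simplex_def Ehat_def)
    then have "\<beta> (\<alpha> i) = Min A \<longleftrightarrow> \<alpha> i \<le> Min A"
      using \<beta>' by blast
    also have "\<dots> \<longleftrightarrow> \<alpha> i = Min A"
      using Min_le_simplex_value[OF fin] \<alpha>' that by (metis order.antisym order.refl)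
    finally show ?thesis
      using that \<alpha>' by (simp add: etimes_def)
  qed
  with \<alpha>' \<beta>' show ?thesis
    unfolding layer_Min_iff[OF A] by (simp add: etimes_in_simplex)
qed

theorem proposition8:
  fixes n k :: nat and A :: "nat set"
  assumes "A \<subseteq> {0..<n}" and "A \<noteq> {}" and "card A = k"
  shows "subsemiring n (layer n (Min A + 1) (Min A) (simplex n A)) (simplex n A)"
  unfolding subsemiring_def
  using eplus_in_layer_Min[OF assms(1,2)] etimes_in_layer_Min[OF assms(1,2)]
  by (auto simp: layer_def)

end
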